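(* Let $x$ be an envy-free complete connected division of a cake among $n$ players. Then there is no connected division $y$ (partial or complete) that strictly Pareto dominates $x$, i.e., there is no connected division $y$ with $u_i(y,i)>u_i(x,i)$ for all $i\in\{1,\dots,n\}$.
   Context: A cake is the interval $[0,1]$. There are $n$ players; each player $i$ has a valuation $v_i$, a nonatomic probability measure on $[0,1]$. A (connected) division $x$ is a sequence $(X_1,\dots,X_n)$ of pairwise disjoint open intervals of $[0,1]$ (possibly empty), $X_i$ being the piece of player $i$; it is complete if the union of the closures of the $X_i$ equals $[0,1]$, and partial otherwise. Write $u_i(x,j)=v_i(X_j)$. $x$ is envy-free if $u_i(x,i)\ge u_i(x,j)$ for all $i,j$. *)

theory Defs
  imports "HOL-Probability.Probability"
begin

definition nonatomic :: "'a measure \<Rightarrow> bool" where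
  "nonatomic M \<longleftrightarrow> (\<forall>A\<in>sets M. 0 < measure M A \<longrightarrow>
      (\<exists>B\<in>sets M. B \<subseteq> A \<and> 0 < measure M B \<and> measure M B < measure M A))"

definition valuation :: "real measure \<Rightarrow> bool" where
  "valuation M \<longleftrightarrow> prob_space M \<and> sets M = sets (restrict_space borel {0..1}) \<and> nonatomic M"

definition open_interval01 :: "real set \<Rightarrow> bool" where
  "open_interval01 X \<longleftrightarrow> (\<exists>a b. 0 \<le> a \<and> b \<le> 1 \<and> X = {a<..<b})"

text \<open>A connected division among players 0..n-1: piece X i of player i.\<close>
definition connected_division :: "nat \<Rightarrow> (nat \<Rightarrow> real set) \<Rightarrow> bool" where
  "connected_division n X \<longleftrightarrow> (\<forall>i<n. open_interval01 (X i)) \<and>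
      (\<forall>i<n. \<forall>j<n. i \<noteq> j \<longrightarrow> X i \<inter> X j = {})"

definition complete_division :: "nat \<Rightarrow> (nat \<Rightarrow> real set) \<Rightarrow> bool" where
  "complete_division n X \<longleftrightarrow> connected_division n X \<and> (\<Union>i<n. closure (X i)) = {0..1}"

definition util :: "(nat \<Rightarrow> real measure) \<Rightarrow> (nat \<Rightarrow> real set) \<Rightarrow> nat \<Rightarrow> nat \<Rightarrow> real" where
  "util v X i j = measure (v i) (X j)"

definition envy_free :: "nat \<Rightarrow> (nat \<Rightarrow> real measure) \<Rightarrow> (nat \<Rightarrow> real set) \<Rightarrow> bool" where
  "envy_free n v X \<longleftrightarrow> (\<forall>i<n. \<forall>j<n. util v X i i \<ge> util v X i j)"

end

theory Submission
  imports Defs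
begin

text \<open>
  Let X be an envy-free complete connected division and suppose the
  connected division Y gives every player i strictly more than X_i.  Then Y_i is
  worth more to player i than every piece X_j, so the interval Y_i cannot lie
  inside a single X_j; being connected, it cannot lie inside the union of the
  disjoint open pieces X_j either.  Hence Y_i contains a point of (0,1) not
  covered by X.  Such "gap points" of a complete division are left endpoints of
  pieces, and never the left endpoint 0 of the piece starting at 0, so there
  are fewer than n of them.  Since the Y_i are disjoint, the chosen gap points
  are pairwise distinct: n distinct points in a set of fewer than n elements.
\<close>

definition gap_points :: "nat \<Rightarrow> (nat \<Rightarrow> real set) \<Rightarrow> real set" where
  "gap_points n X = {p. 0 < p \<and> p < 1 \<and> (\<forall>j<n. p \<notin> X j)}"

lemma connected_division_endpoints:
  assumes "connected_division n X"
  obtains a b where "\<And>j. j < n \<Longrightarrow> 0 \<le> a j \<and> b j \<le> 1 \<and> X j = {a j<..<b j}"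
proof -
  have "\<forall>j\<in>{..<n}. \<exists>ab. 0 \<le> fst ab \<and> snd ab \<le> 1 \<and> X j = {fst ab<..<snd ab}"
    using assms unfolding connected_division_def open_interval01_def by force
  then obtain ab where "\<forall>j\<in>{..<n}. 0 \<le> fst (ab j) \<and> snd (ab j) \<le> 1 \<and> X j = {fst (ab j)<..<snd (ab j)}"
    by (rule bchoice[THEN exE])
  then show ?thesis using that[of "fst \<circ> ab" "snd \<circ> ab"] by simp
qed

text \<open>If the closed intervals [a_j,b_j] cover [0,1], every point p of [0,1) lies
  in some half-open interval [a_j,b_j).  (Take the least left endpoint above p,
  or 1, and look at the interval covering the midpoint between it and p.)\<close>
lemma interval_cover_half_open:
  fixes a b :: "nat \<Rightarrow> real"
  assumes cover: "(\<Union>j<n. closure {a j<..<b j}) = {0..1}" and p: "0 \<le> p" "p < 1"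
  shows "\<exists>j<n. a j \<le> p \<and> p < b j"
proof -
  define S where "S = insert 1 {a j | j. j < n \<and> a j > p}"
  have "finite S" unfolding S_def by auto
  define q where "q = Min S"
  have "q \<in> S" unfolding q_def using \<open>finite S\<close> by (intro Min_in) (auto simp: S_def)
  then have "p < q" using p unfolding S_def by auto
  have q_least: "\<And>x. x \<in> S \<Longrightarrow> q \<le> x" unfolding q_def using \<open>finite S\<close> by simp
  then have "q \<le> 1" by (simp add: S_def)
  define m where "m = (p + q) / 2"
  have "m \<in> {0..1}" using p \<open>p < q\<close> \<open>q \<le> 1\<close> by (simp add: m_def)
  then obtain j where j: "j < n" "m \<in> closure {a j<..<b j}" using cover by blast
  then have "a j < b j" by (cases "a j < b j") auto
  with j(2) have m_in: "m \<in> {a j..b j}" by simp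
  have "\<not> p < a j"
  proof
    assume "p < a j"
    then have "q \<le> a j" using j(1) by (intro q_least) (auto simp: S_def)
    then show False using m_in \<open>p < q\<close> by (simp add: m_def)
  qed
  then show ?thesis using j(1) m_in \<open>p < q\<close> by (auto simp: m_def)
qed

lemma complete_division_uncovered_left_endpoint:
  assumes "complete_division n X" "0 \<le> p" "p < 1" "\<forall>j<n. p \<notin> X j"
  shows "\<exists>j<n. \<exists>c. p < c \<and> X j = {p<..<c}"
proof -
  obtain a b where ab: "\<And>j. j < n \<Longrightarrow> 0 \<le> a j \<and> b j \<le> 1 \<and> X j = {a j<..<b j}"
    using assms(1) connected_division_endpoints unfolding complete_division_def by blast
  then have "(\<Union>j<n. closure {a j<..<b j}) = {0..1}"
    using assms(1) unfolding complete_division_def by simp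
  then obtain j where j: "j < n" "a j \<le> p" "p < b j"
    using interval_cover_half_open assms(2,3) by blast
  then have "a j = p" using assms(4) ab[OF j(1)] by force
  then show ?thesis using j ab by blast
qed

text \<open>A complete division has fewer than n gap points: each is the left endpoint
  of some piece, and the piece whose left endpoint is 0 contributes none.\<close>
lemma complete_division_gap_points:
  assumes "complete_division n X"
  shows "finite (gap_points n X)" "card (gap_points n X) < n"
proof -
  have no_zero: "0 \<notin> X j" if "j < n" for j
    using assms that unfolding complete_division_def connected_division_def open_interval01_def
    by fastforce
  obtain j0 c0 where j0: "j0 < n" "X j0 = {0<..<c0}" "0 < c0"
    using complete_division_uncovered_left_endpoint[OF assms, of 0] no_zero by auto
  have sub: "gap_points n X \<subseteq> (\<lambda>j. Inf (X j)) ` ({..<n} - {j0})"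
  proof
    fix p assume "p \<in> gap_points n X"
    then have p: "0 < p" "p < 1" "\<forall>j<n. p \<notin> X j" by (auto simp: gap_points_def)
    then obtain j c where "j < n" "p < c" "X j = {p<..<c}"
      using complete_division_uncovered_left_endpoint[OF assms] by (meson less_imp_le)
    moreover have "j \<noteq> j0" using j0 \<open>X j = {p<..<c}\<close> \<open>p < c\<close> p(1)
      by (metis cInf_greaterThanLessThan less_irrefl)
    ultimately show "p \<in> (\<lambda>j. Inf (X j)) ` ({..<n} - {j0})"
      by (intro image_eqI[of _ _ j]) auto
  qed
  have fin: "finite ((\<lambda>j. Inf (X j)) ` ({..<n} - {j0}))" by simp
  then show "finite (gap_points n X)" using sub by (rule finite_subset[rotated])
  have "card ((\<lambda>j. Inf (X j)) ` ({..<n} - {j0})) < n"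
    using j0(1) card_image_le[of "{..<n} - {j0}" "\<lambda>j. Inf (X j)"] by simp
  then show "card (gap_points n X) < n"
    using card_mono[OF fin sub] by linarith
qed

lemma connected_in_disjoint_open_union:
  assumes "connected S" "\<And>k. k \<in> I \<Longrightarrow> open (U k)"
    and "\<And>k l. k \<in> I \<Longrightarrow> l \<in> I \<Longrightarrow> k \<noteq> l \<Longrightarrow> U k \<inter> U l = {}"
    and "S \<subseteq> (\<Union>k\<in>I. U k)" "j \<in> I" "x \<in> S" "x \<in> U j"
  shows "S \<subseteq> U j"
proof -
  define V where "V = (\<Union>k\<in>I - {j}. U k)"
  have "open V" using assms(2) unfolding V_def by auto
  moreover have "U j \<inter> V \<inter> S = {}" "S \<subseteq> U j \<union> V"
    using assms(3-5) unfolding V_def by blast+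
  ultimately have "U j \<inter> S = {} \<or> V \<inter> S = {}"
    using connectedD[OF assms(1)] assms(2,5) by blast
  then show ?thesis using assms(6,7) \<open>S \<subseteq> U j \<union> V\<close> by blast
qed

lemma valuation_open_interval01_sets:
  assumes "valuation M" "open_interval01 Z"
  shows "Z \<in> sets M"
proof -
  have "open Z" "Z \<subseteq> {0..1}" using assms(2) unfolding open_interval01_def by auto
  then have "Z \<in> sets (restrict_space borel {0..1})"
    by (subst sets_restrict_space_iff) auto
  then show ?thesis using assms(1) unfolding valuation_def by simp
qed

text \<open>Escape lemma: a nonempty interval that some valuation values strictly more
  than every piece of a connected division X cannot be inside one piece, hence,
  by connectedness, contains a point covered by no piece of X.\<close>
lemma improving_interval_leaves_division:
  assumes M: "valuation M" and X: "connected_division n X"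
    and Z: "open_interval01 Z" "Z \<noteq> {}"
    and better: "\<And>j. j < n \<Longrightarrow> measure M (X j) < measure M Z"
  shows "\<exists>p\<in>Z. \<forall>j<n. p \<notin> X j"
proof (rule ccontr)
  assume "\<not> (\<exists>p\<in>Z. \<forall>j<n. p \<notin> X j)"
  then have covered: "Z \<subseteq> (\<Union>j\<in>{..<n}. X j)" by blast
  obtain y where "y \<in> Z" using Z(2) by blast
  with covered obtain j where j: "j < n" "y \<in> X j" by blast
  have X_intervals: "\<And>k. k < n \<Longrightarrow> open_interval01 (X k)"
    using X unfolding connected_division_def by blast
  have "connected Z" using Z(1) unfolding open_interval01_def by auto
  moreover have "\<And>k. k < n \<Longrightarrow> open (X k)"
    using X_intervals unfolding open_interval01_def by fastforce
  ultimately have "Z \<subseteq> X j"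
    using X covered j \<open>y \<in> Z\<close> unfolding connected_division_def
    by (intro connected_in_disjoint_open_union[where I = "{..<n}" and U = X]) auto
  moreover have "finite_measure M"
    using M unfolding valuation_def by (auto intro: prob_space.finite_measure)
  ultimately have "measure M Z \<le> measure M (X j)"
    using finite_measure.finite_measure_mono valuation_open_interval01_sets[OF M X_intervals[OF j(1)]]
    by blast
  then show False using better[OF j(1)] by simp
qed

theorem theorem4:
  fixes n :: nat and v :: "nat \<Rightarrow> real measure" and X :: "nat \<Rightarrow> real set"
  assumes "\<forall>i<n. valuation (v i)"
    and "complete_division n X"
    and "envy_free n v X"
  shows "\<not> (\<exists>Y. connected_division n Y \<and> (\<forall>i<n. util v Y i i > util v X i i))"
proof
  assume "\<exists>Y. connected_division n Y \<and> (\<forall>i<n. util v Y i i > util v X i i)"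
  then obtain Y where Y: "connected_division n Y"
    and dom: "\<And>i. i < n \<Longrightarrow> util v Y i i > util v X i i" by blast
  have "\<exists>p\<in>Y i. p \<in> gap_points n X" if i: "i < n" for i
  proof -
    have "\<And>j. j < n \<Longrightarrow> measure (v i) (X j) < measure (v i) (Y i)"
      using assms(3) dom[OF i] i unfolding envy_free_def util_def by force
    moreover have "Y i \<noteq> {}" using dom[OF i] by (auto simp: util_def)
    moreover have Yi: "open_interval01 (Y i)" using Y i unfolding connected_division_def by blast
    moreover have "valuation (v i)" using assms(1) i by blast
    moreover have "connected_division n X" using assms(2) unfolding complete_division_def by blast
    ultimately obtain p where "p \<in> Y i" "\<forall>j<n. p \<notin> X j"
      using improving_interval_leaves_division by metis
    moreover have "0 < p \<and> p < 1" using Yi \<open>p \<in> Y i\<close> unfolding open_interval01_def by auto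
    ultimately show ?thesis unfolding gap_points_def by blast
  qed
  then obtain p where p: "\<And>i. i < n \<Longrightarrow> p i \<in> Y i \<and> p i \<in> gap_points n X" by metis
  have "inj_on p {..<n}"
    using p Y unfolding connected_division_def by (intro inj_onI) (metis disjoint_iff lessThan_iff)
  moreover have "p ` {..<n} \<subseteq> gap_points n X" using p by blast
  ultimately have "card {..<n} \<le> card (gap_points n X)"
    using card_inj_on_le complete_division_gap_points(1)[OF assms(2)] by blast
  then show False using complete_division_gap_points(2)[OF assms(2)] by simp
qed

end
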